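(* Let $\mathcal E$ be a nest on a complex Banach space $X$ and let $\Phi$ be a support function on $\mathcal E$ with $\Phi(\{0\})=\{0\}$. Then: (i) $\mathcal M(\Phi)=\mathcal M(\Phi_-)$; (ii) $\Phi_{\mathcal M(\Phi)}=\Phi_-$; (iii) if $\Phi$ is admissible, then $\Phi_{\mathcal M(\Phi)}=\Phi$.
   Context: A nest $\mathcal E$ on $X$ is a family of closed linear subspaces of $X$, totally ordered by inclusion, containing $\{0\}$ and $X$, closed under arbitrary meets $\wedge$ (intersections) and joins $\vee$ (norm-closed linear spans of unions). For $E\in\mathcal E$, $E_-=\vee\{F\in\mathcal E: F\subsetneq E\}$. A support function on $\mathcal E$ is an inclusion-preserving map $\Phi:\mathcal E\to\mathcal E$; it is admissible if for every $N\in\mathcal E\setminus\{\{0\}\}$, $\vee_{E\in\mathcal E,E\subsetneq N}\Phi(E)=\Phi(N_-)$. For a support function $\Phi$, $\Phi_-$ is defined by $\Phi_-(\{0\})=\Phi(\{0\})$ and, for $E\neq\{0\}$, $\Phi_-(E)=\Phi(E)$ if $E_-\subsetneq E$ and $\Phi_-(E)=\vee_{F\in\mathcal E,F\subsetneq E}\Phi(F)$ if $E_-=E$ (it is the greatest admissible support function below $\Phi$ in the pointwise inclusion order). $\mathcal M(\Phi)=\{T\in\mathcal B(X): TE\subseteq\Phi(E)\ \forall E\in\mathcal E\}$; it is a bimodule over the nest algebra $\mathcal T(\mathcal E)=\{T\in\mathcal B(X): TE\subseteq E\ \forall E\in\mathcal E\}$. For a $\mathcal T(\mathcal E)$-bimodule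 $\mathcal J$ (a linear subspace of $\mathcal B(X)$ with $\mathcal T(\mathcal E)\mathcal J,\mathcal J\mathcal T(\mathcal E)\subseteq\mathcal J$), $\Phi_{\mathcal J}(E)=[\mathcal JE]$, the norm-closed linear span of $\{Tx:T\in\mathcal J,x\in E\}$. *)

theory Defs
  imports "HOL-Analysis.Analysis"
begin

class complex_vector = real_vector +
  fixes scaleC :: "complex \<Rightarrow> 'a \<Rightarrow> 'a" (infixr \<open>*\<^sub>C\<close> 75)
  assumes scaleC_add_right: "a *\<^sub>C (x + y) = a *\<^sub>C x + a *\<^sub>C y"
    and scaleC_add_left: "(a + b) *\<^sub>C x = a *\<^sub>C x + b *\<^sub>C x"
    and scaleC_scaleC: "a *\<^sub>C (b *\<^sub>C x) = (a * b) *\<^sub>C x"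
    and scaleC_one: "1 *\<^sub>C x = x"
    and scaleC_of_real: "(complex_of_real r) *\<^sub>C x = r *\<^sub>R x"

class complex_normed_vector = complex_vector + real_normed_vector +
  assumes norm_scaleC: "norm (a *\<^sub>C x) = cmod a * norm x"

definition csubspace :: "'a::complex_vector set \<Rightarrow> bool" where
  "csubspace S \<longleftrightarrow> 0 \<in> S \<and> (\<forall>x\<in>S. \<forall>y\<in>S. x + y \<in> S) \<and> (\<forall>c. \<forall>x\<in>S. c *\<^sub>C x \<in> S)"

definition closed_csubspace :: "'a::complex_normed_vector set \<Rightarrow> bool" where
  "closed_csubspace S \<longleftrightarrow> csubspace S \<and> closed S"

definition cspan :: "'a::complex_vector set \<Rightarrow> 'a set" where
  "cspan S = \<Inter>{V. csubspace V \<and> S \<subseteq> V}"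

definition cjoin :: "'a::complex_normed_vector set set \<Rightarrow> 'a set" where
  "cjoin F = closure (cspan (\<Union>F))"

definition cbounded_linear :: "('a::complex_normed_vector \<Rightarrow> 'a) \<Rightarrow> bool" where
  "cbounded_linear T \<longleftrightarrow> bounded_linear T \<and> (\<forall>c x. T (c *\<^sub>C x) = c *\<^sub>C T x)"

definition nest :: "'a::complex_normed_vector set set \<Rightarrow> bool" where
  "nest \<E> \<longleftrightarrow> (\<forall>E\<in>\<E>. closed_csubspace E)
     \<and> (\<forall>E\<in>\<E>. \<forall>F\<in>\<E>. E \<subseteq> F \<or> F \<subseteq> E)
     \<and> {0} \<in> \<E> \<and> UNIV \<in> \<E>
     \<and> (\<forall>\<F>. \<F> \<subseteq> \<E> \<longrightarrow> \<Inter>\<F> \<in> \<E>)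
     \<and> (\<forall>\<F>. \<F> \<subseteq> \<E> \<longrightarrow> cjoin \<F> \<in> \<E>)"

definition nest_minus :: "'a::complex_normed_vector set set \<Rightarrow> 'a set \<Rightarrow> 'a set" where
  "nest_minus \<E> E = cjoin {F\<in>\<E>. F \<subset> E}"

definition support_function ::
  "'a::complex_normed_vector set set \<Rightarrow> ('a set \<Rightarrow> 'a set) \<Rightarrow> bool" where
  "support_function \<E> \<Phi> \<longleftrightarrow> (\<forall>E\<in>\<E>. \<Phi> E \<in> \<E>) \<and> (\<forall>E\<in>\<E>. \<forall>F\<in>\<E>. E \<subseteq> F \<longrightarrow> \<Phi> E \<subseteq> \<Phi> F)"

definition admissible ::
  "'a::complex_normed_vector set set \<Rightarrow> ('a set \<Rightarrow> 'a set) \<Rightarrow> bool" where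
  "admissible \<E> \<Phi> \<longleftrightarrow> support_function \<E> \<Phi> \<and>
     (\<forall>N\<in>\<E>. N \<noteq> {0} \<longrightarrow> cjoin (\<Phi> ` {E\<in>\<E>. E \<subset> N}) = \<Phi> (nest_minus \<E> N))"

definition Phi_minus ::
  "'a::complex_normed_vector set set \<Rightarrow> ('a set \<Rightarrow> 'a set) \<Rightarrow> 'a set \<Rightarrow> 'a set" where
  "Phi_minus \<E> \<Phi> E =
     (if E = {0} then \<Phi> {0}
      else if nest_minus \<E> E \<subset> E then \<Phi> E
      else cjoin (\<Phi> ` {F\<in>\<E>. F \<subset> E}))"

definition M_of ::
  "'a::complex_normed_vector set set \<Rightarrow> ('a set \<Rightarrow> 'a set) \<Rightarrow> ('a \<Rightarrow> 'a) set" where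
  "M_of \<E> \<Phi> = {T. cbounded_linear T \<and> (\<forall>E\<in>\<E>. T ` E \<subseteq> \<Phi> E)}"

definition Phi_of :: "('a::complex_normed_vector \<Rightarrow> 'a) set \<Rightarrow> 'a set \<Rightarrow> 'a set" where
  "Phi_of J E = closure (cspan {T x | T x. T \<in> J \<and> x \<in> E})"

end

theory Submission
  imports Defs
begin

text \<open>
  An operator T \<in> M(\<Phi>) maps a limit element E = E_- of the nest, the closed span of its
  proper predecessors F, into the closed span of the \<Phi>(F), by continuity of T; since
  \<Phi>_- \<le> \<Phi>, this gives M(\<Phi>) = M(\<Phi>_-) and [M(\<Phi>) E] \<subseteq> \<Phi>_-(E).
  Conversely, if F \<in> \<E>, x \<notin> F and y \<in> \<Phi>(F), a bounded functional f vanishing on F with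
  f(x) = 1 (Hahn-Banach) yields the rank-one operator z \<mapsto> f(z) y in M(\<Phi>): as \<E> is totally
  ordered, every H \<in> \<E> either lies in F, where the operator vanishes, or contains F, so that
  y \<in> \<Phi>(H). Taking F = E_- when E_- \<subset> E, and every proper predecessor F of E otherwise,
  gives \<Phi>_-(E) \<subseteq> [M(\<Phi>) E]. Admissibility says precisely \<Phi>_- = \<Phi>, whence (iii).
\<close>

section \<open>Hahn-Banach extension\<close>

text \<open>Partial linear functionals are encoded by their graphs, so that extension is inclusion.\<close>

definition dominated_linear_graph :: "('a::real_vector \<Rightarrow> real) \<Rightarrow> ('a \<times> real) set \<Rightarrow> bool" where
  "dominated_linear_graph p G \<longleftrightarrow>
     (\<forall>a u v. (a, u) \<in> G \<longrightarrow> (a, v) \<in> G \<longrightarrow> u = v) \<and>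
     (\<forall>a u b v. (a, u) \<in> G \<longrightarrow> (b, v) \<in> G \<longrightarrow> (a + b, u + v) \<in> G) \<and>
     (\<forall>a u c. (a, u) \<in> G \<longrightarrow> (c *\<^sub>R a, c * u) \<in> G) \<and>
     (\<forall>a u. (a, u) \<in> G \<longrightarrow> u \<le> p a)"

lemma dominated_linear_graphD:
  assumes "dominated_linear_graph p G"
  shows dominated_linear_graph_unique: "(a, u) \<in> G \<Longrightarrow> (a, v) \<in> G \<Longrightarrow> u = v"
    and dominated_linear_graph_add: "(a, u) \<in> G \<Longrightarrow> (b, v) \<in> G \<Longrightarrow> (a + b, u + v) \<in> G"
    and dominated_linear_graph_scaleR: "(a, u) \<in> G \<Longrightarrow> (c *\<^sub>R a, c * u) \<in> G"
    and dominated_linear_graph_le: "(a, u) \<in> G \<Longrightarrow> u \<le> p a"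
  using assms unfolding dominated_linear_graph_def by blast+

lemma dominated_linear_graph_Union_chain:
  assumes "C \<in> chains {G. dominated_linear_graph p G}"
  shows "dominated_linear_graph p (\<Union>C)"
proof -
  have graphs: "\<And>G. G \<in> C \<Longrightarrow> dominated_linear_graph p G"
    using assms by (auto simp: chains_def)
  have "\<And>G H. G \<in> C \<Longrightarrow> H \<in> C \<Longrightarrow> G \<subseteq> H \<or> H \<subseteq> G"
    using assms by (auto simp: chains_def chain_subset_def)
  then have common: "\<exists>G\<in>C. (a, u) \<in> G \<and> (b, v) \<in> G"
    if "(a, u) \<in> \<Union>C" "(b, v) \<in> \<Union>C" for a u b v
    using that by blast
  show ?thesis
    unfolding dominated_linear_graph_def
  proof (intro conjI allI impI)
    fix a u v assume "(a, u) \<in> \<Union>C" "(a, v) \<in> \<Union>C"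
    then show "u = v" by (meson common graphs dominated_linear_graph_unique)
  next
    fix a u b v assume "(a, u) \<in> \<Union>C" "(b, v) \<in> \<Union>C"
    then show "(a + b, u + v) \<in> \<Union>C" by (meson common graphs dominated_linear_graph_add UnionI)
  next
    fix a u c assume "(a, u) \<in> \<Union>C"
    then show "(c *\<^sub>R a, c * u) \<in> \<Union>C" by (meson graphs dominated_linear_graph_scaleR UnionE UnionI)
  next
    fix a u assume "(a, u) \<in> \<Union>C"
    then show "u \<le> p a" by (meson graphs dominated_linear_graph_le UnionE)
  qed
qed

lemma dominated_linear_graph_zero:
  "dominated_linear_graph p G \<Longrightarrow> G \<noteq> {} \<Longrightarrow> (0, 0) \<in> G"
  using dominated_linear_graph_scaleR[of p G _ _ 0] by fastforce

lemma dominated_extension_le: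
  fixes p :: "'a::real_vector \<Rightarrow> real"
  assumes pos_homogeneous: "\<And>t a. t > 0 \<Longrightarrow> p (t *\<^sub>R a) = t * p a"
    and G: "dominated_linear_graph p G"
    and lower: "\<And>a u. (a, u) \<in> G \<Longrightarrow> u - p (a - w) \<le> c"
    and upper: "\<And>a u. (a, u) \<in> G \<Longrightarrow> c \<le> p (a + w) - u"
    and au: "(a, u) \<in> G"
  shows "u + t * c \<le> p (a + t *\<^sub>R w)"
proof -
  have scaled: "((1 / s) *\<^sub>R a, (1 / s) * u) \<in> G" for s
    using dominated_linear_graph_scaleR[OF G au] .
  consider "t = 0" | "t > 0" | "t < 0" by linarith
  then show ?thesis
  proof cases
    case 1
    then show ?thesis using dominated_linear_graph_le[OF G au] by simp
  next
    case 2
    have "t * c \<le> t * (p ((1 / t) *\<^sub>R a + w) - (1 / t) * u)"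
      using upper[OF scaled] 2 by (simp add: mult_left_mono)
    also have "\<dots> = p (t *\<^sub>R ((1 / t) *\<^sub>R a + w)) - u"
      using 2 by (simp add: pos_homogeneous right_diff_distrib)
    also have "t *\<^sub>R ((1 / t) *\<^sub>R a + w) = a + t *\<^sub>R w"
      using 2 by (simp add: algebra_simps)
    finally show ?thesis by simp
  next
    case 3
    define s where "s = - t"
    have s: "s > 0" using 3 by (simp add: s_def)
    have "u - p (s *\<^sub>R ((1 / s) *\<^sub>R a - w)) = s * ((1 / s) * u - p ((1 / s) *\<^sub>R a - w))"
      using s by (simp add: pos_homogeneous right_diff_distrib)
    also have "\<dots> \<le> s * c"
      using lower[OF scaled] s by (simp add: mult_left_mono)
    also have "s *\<^sub>R ((1 / s) *\<^sub>R a - w) = a + t *\<^sub>R w"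
      using s by (simp add: s_def algebra_simps)
    finally show ?thesis by (simp add: s_def)
  qed
qed

lemma dominated_linear_graph_extend:
  fixes p :: "'a::real_vector \<Rightarrow> real"
  assumes subadditive: "\<And>a b. p (a + b) \<le> p a + p b"
    and pos_homogeneous: "\<And>t a. t > 0 \<Longrightarrow> p (t *\<^sub>R a) = t * p a"
    and G: "dominated_linear_graph p G" "G \<noteq> {}"
    and w: "\<And>u. (w, u) \<notin> G"
  shows "\<exists>G'. dominated_linear_graph p G' \<and> G \<subseteq> G' \<and> (\<exists>c. (w, c) \<in> G')"
proof -
  note graph = dominated_linear_graphD[OF G(1)]
  have zero: "(0, 0) \<in> G" using dominated_linear_graph_zero[OF G] .
  have separated: "u - p (a - w) \<le> p (b + w) - v" if "(a, u) \<in> G" "(b, v) \<in> G" for a u b v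
  proof -
    have "u + v \<le> p ((a - w) + (b + w))" using graph(2,4) that by simp
    also have "\<dots> \<le> p (a - w) + p (b + w)" by (rule subadditive)
    finally show ?thesis by simp
  qed
  \<comment> \<open>any value between the two families of bounds can be assigned to w\<close>
  define c where "c = (SUP (a, u)\<in>G. u - p (a - w))"
  have bdd: "bdd_above ((\<lambda>(a, u). u - p (a - w)) ` G)"
    using separated[OF _ zero] by (auto intro!: bdd_aboveI2)
  have lower: "u - p (a - w) \<le> c" if "(a, u) \<in> G" for a u
    unfolding c_def using cSUP_upper[OF that bdd] by simp
  have upper: "c \<le> p (b + w) - v" if "(b, v) \<in> G" for b v
    unfolding c_def using G(2) separated[OF _ that] by (auto intro!: cSUP_least)
  define G' where "G' = {(a + t *\<^sub>R w, u + t * c) | a u t. (a, u) \<in> G}"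
  have coordinate_unique: "t = s"
    if "a + t *\<^sub>R w = b + s *\<^sub>R w" "(a, u) \<in> G" "(b, v) \<in> G" for a b t s u v
  proof (rule ccontr)
    assume "t \<noteq> s"
    have "w = inverse (t - s) *\<^sub>R ((t - s) *\<^sub>R w)" using \<open>t \<noteq> s\<close> by simp
    also have "(t - s) *\<^sub>R w = b - a" using that(1) by (simp add: algebra_simps)
    finally have "w = inverse (t - s) *\<^sub>R (b - a)" .
    moreover have "(b - a, v - u) \<in> G" using graph(2)[OF that(3) graph(3)[OF that(2), of "-1"]] by simp
    ultimately show False using w graph(3) by metis
  qed
  have "dominated_linear_graph p G'"
    unfolding dominated_linear_graph_def
  proof (intro conjI allI impI)
    fix z u1 u2 assume "(z, u1) \<in> G'" "(z, u2) \<in> G'"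
    then obtain a u t b v s where 1: "z = a + t *\<^sub>R w" "u1 = u + t * c" "(a, u) \<in> G"
      and 2: "z = b + s *\<^sub>R w" "u2 = v + s * c" "(b, v) \<in> G"
      unfolding G'_def by blast
    then have "t = s" using coordinate_unique by metis
    with 1 2 show "u1 = u2" using graph(1) by auto
  next
    fix z1 u1 z2 u2 assume "(z1, u1) \<in> G'" "(z2, u2) \<in> G'"
    then obtain a u t b v s where "z1 = a + t *\<^sub>R w" "u1 = u + t * c" "(a, u) \<in> G"
      and "z2 = b + s *\<^sub>R w" "u2 = v + s * c" "(b, v) \<in> G"
      unfolding G'_def by blast
    then show "(z1 + z2, u1 + u2) \<in> G'"
      unfolding G'_def
      by (intro CollectI exI[of _ "a + b"] exI[of _ "u + v"] exI[of _ "t + s"])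
        (simp add: algebra_simps graph(2))
  next
    fix z u1 r assume "(z, u1) \<in> G'"
    then obtain a u t where "z = a + t *\<^sub>R w" "u1 = u + t * c" "(a, u) \<in> G"
      unfolding G'_def by blast
    then show "(r *\<^sub>R z, r * u1) \<in> G'"
      unfolding G'_def
      by (intro CollectI exI[of _ "r *\<^sub>R a"] exI[of _ "r * u"] exI[of _ "r * t"])
        (simp add: algebra_simps graph(3))
  next
    fix z u1 assume "(z, u1) \<in> G'"
    then show "u1 \<le> p z"
      unfolding G'_def using dominated_extension_le[OF pos_homogeneous G(1) lower upper] by blast
  qed
  moreover have "G \<subseteq> G'"
    unfolding G'_def by (force intro: exI[of _ 0])
  moreover have "(w, c) \<in> G'"
    unfolding G'_def using zero by (force intro: exI[of _ 1])
  ultimately show ?thesis by blast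
qed

theorem hahn_banach_graph:
  fixes p :: "'a::real_vector \<Rightarrow> real"
  assumes subadditive: "\<And>a b. p (a + b) \<le> p a + p b"
    and pos_homogeneous: "\<And>t a. t > 0 \<Longrightarrow> p (t *\<^sub>R a) = t * p a"
    and G0: "dominated_linear_graph p G0" "G0 \<noteq> {}"
  shows "\<exists>g. linear g \<and> (\<forall>z. g z \<le> p z) \<and> (\<forall>(a, u)\<in>G0. g a = u)"
proof -
  define A where "A = {G. dominated_linear_graph p G \<and> G0 \<subseteq> G}"
  have "\<exists>U\<in>A. \<forall>G\<in>C. G \<subseteq> U" if C: "C \<in> chains A" for C
  proof (cases "C = {}")
    case True
    then show ?thesis using G0 by (auto simp: A_def)
  next
    case False
    have "C \<in> chains {G. dominated_linear_graph p G}"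
      using C by (auto simp: chains_def A_def)
    moreover have "G0 \<subseteq> \<Union>C"
      using C False by (auto simp: chains_def A_def)
    ultimately have "\<Union>C \<in> A"
      by (simp add: A_def dominated_linear_graph_Union_chain)
    then show ?thesis by blast
  qed
  then obtain M where M: "dominated_linear_graph p M" "G0 \<subseteq> M"
    and maximal: "\<And>G. dominated_linear_graph p G \<Longrightarrow> M \<subseteq> G \<Longrightarrow> G = M"
    using Zorn_Lemma2[of A] by (auto simp: A_def)
  have "M \<noteq> {}" using M(2) G0(2) by blast
  have total: "\<exists>u. (w, u) \<in> M" for w
  proof (rule ccontr)
    assume "\<nexists>u. (w, u) \<in> M"
    then obtain G c where "dominated_linear_graph p G" "M \<subseteq> G" "(w, c) \<in> G"
      using dominated_linear_graph_extend[of p M w] subadditive pos_homogeneous M(1) \<open>M \<noteq> {}\<close>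
      by blast
    then show False using maximal \<open>\<nexists>u. (w, u) \<in> M\<close> by blast
  qed
  note graph = dominated_linear_graphD[OF M(1)]
  define g where "g w = (THE u. (w, u) \<in> M)" for w
  have g_eq: "g w = u" if "(w, u) \<in> M" for w u
    unfolding g_def using that graph(1) by blast
  have g_graph: "(w, g w) \<in> M" for w
    using total[of w] g_eq by metis
  have "linear g"
    by (rule linearI) (simp_all add: g_eq graph(2,3) g_graph)
  moreover have "g z \<le> p z" for z
    using graph(4)[OF g_graph] .
  moreover have "g a = u" if "(a, u) \<in> G0" for a u
    using g_eq that M(2) by blast
  ultimately show ?thesis by blast
qed

lemma dominated_linear_graph_line:
  fixes x :: "'a::real_vector"
  assumes "x \<noteq> 0" and le: "\<And>t. t * d \<le> p (t *\<^sub>R x)"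
  shows "dominated_linear_graph p (range (\<lambda>t. (t *\<^sub>R x, t * d)))"
  unfolding dominated_linear_graph_def
proof (intro conjI allI impI; elim rangeE)
  show "u = v" if "(a, u) = (t *\<^sub>R x, t * d)" "(a, v) = (s *\<^sub>R x, s * d)" for a u v t s
    using that \<open>x \<noteq> 0\<close> by auto
  show "(a + b, u + v) \<in> range (\<lambda>t. (t *\<^sub>R x, t * d))"
    if "(a, u) = (t *\<^sub>R x, t * d)" "(b, v) = (s *\<^sub>R x, s * d)" for a u b v t s
    using that by (intro image_eqI[where x = "t + s"]) (auto simp: algebra_simps)
  show "(c *\<^sub>R a, c * u) \<in> range (\<lambda>t. (t *\<^sub>R x, t * d))"
    if "(a, u) = (t *\<^sub>R x, t * d)" for a u c t
    using that by (intro image_eqI[where x = "c * t"]) auto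
  show "u \<le> p a" if "(a, u) = (t *\<^sub>R x, t * d)" for a u t
    using that le by auto
qed

section \<open>Separating functionals and rank-one operators\<close>

lemma infdist_subspace_add:
  fixes F :: "'a::real_normed_vector set"
  assumes "subspace F"
  shows "infdist (a + b) F \<le> infdist a F + infdist b F"
proof -
  have F: "F \<noteq> {}" using subspace_0[OF assms] by blast
  have "infdist (a + b) F - dist b m' \<le> dist a m" if "m \<in> F" "m' \<in> F" for m m'
  proof -
    have "infdist (a + b) F \<le> dist (a + b) (m + m')"
      using infdist_le subspace_add[OF assms that] by blast
    also have "\<dots> \<le> dist a m + dist b m'"
      using norm_triangle_ineq[of "a - m" "b - m'"] by (simp add: dist_norm algebra_simps)
    finally show ?thesis by simp
  qed
  then have "infdist (a + b) F - dist b m' \<le> infdist a F" if "m' \<in> F" for m'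
    using that F by (simp add: infdist_notempty cINF_greatest)
  then have "infdist (a + b) F - infdist a F \<le> dist b m'" if "m' \<in> F" for m'
    using that by fastforce
  then have "infdist (a + b) F - infdist a F \<le> infdist b F"
    using F by (simp add: infdist_notempty cINF_greatest)
  then show ?thesis by simp
qed

lemma infdist_subspace_scaleR_le:
  fixes F :: "'a::real_normed_vector set"
  assumes "subspace F" "t > 0"
  shows "infdist (t *\<^sub>R a) F \<le> t * infdist a F"
proof -
  have F: "F \<noteq> {}" using subspace_0[OF assms(1)] by blast
  have "infdist (t *\<^sub>R a) F / t \<le> dist a m" if "m \<in> F" for m
  proof -
    have "infdist (t *\<^sub>R a) F \<le> dist (t *\<^sub>R a) (t *\<^sub>R m)"
      using infdist_le subspace_scale[OF assms(1) that] by blast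
    also have "\<dots> = t * dist a m"
      using assms(2) by (simp add: dist_norm flip: scaleR_diff_right)
    finally show ?thesis using assms(2) by (simp add: divide_le_eq mult.commute)
  qed
  then have "infdist (t *\<^sub>R a) F / t \<le> infdist a F"
    using F by (simp add: infdist_notempty cINF_greatest)
  then show ?thesis using assms(2) by (simp add: divide_le_eq mult.commute)
qed

lemma infdist_subspace_scaleR:
  fixes F :: "'a::real_normed_vector set"
  assumes "subspace F" "t > 0"
  shows "infdist (t *\<^sub>R a) F = t * infdist a F"
proof (rule antisym)
  show "infdist (t *\<^sub>R a) F \<le> t * infdist a F"
    using infdist_subspace_scaleR_le[OF assms] .
  have "infdist a F \<le> inverse t * infdist (t *\<^sub>R a) F"
    using infdist_subspace_scaleR_le[of F "inverse t" "t *\<^sub>R a"] assms by simp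
  then show "t * infdist a F \<le> infdist (t *\<^sub>R a) F"
    using assms(2) by (simp add: field_simps)
qed

lemma separating_linear_functional:
  fixes F :: "'a::real_normed_vector set"
  assumes F: "subspace F" "closed F" and x: "x \<notin> F"
  shows "\<exists>g. linear g \<and> (\<forall>z. \<bar>g z\<bar> \<le> norm z) \<and> (\<forall>m\<in>F. g m = 0) \<and> g x \<noteq> 0"
proof -
  define p where "p z = infdist z F" for z
  have "x \<noteq> 0" using x subspace_0[OF F(1)] by blast
  have d: "p x > 0"
    unfolding p_def using infdist_pos_not_in_closed[OF F(2) _ x] subspace_0[OF F(1)] by blast
  have line_le: "t * p x \<le> p (t *\<^sub>R x)" for t
  proof (cases "t > 0")
    case True
    then show ?thesis by (simp add: p_def infdist_subspace_scaleR[OF F(1)])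
  next
    case False
    then have "t * p x \<le> 0" using d by (simp add: mult_nonpos_nonneg)
    then show ?thesis using infdist_nonneg[of "t *\<^sub>R x" F] by (simp add: p_def)
  qed
  have line_graph: "dominated_linear_graph p (range (\<lambda>t. (t *\<^sub>R x, t * p x)))"
    using dominated_linear_graph_line[OF \<open>x \<noteq> 0\<close> line_le] .
  have "p (a + b) \<le> p a + p b" "t > 0 \<Longrightarrow> p (t *\<^sub>R a) = t * p a" for a b t
    unfolding p_def using infdist_subspace_add infdist_subspace_scaleR F(1) by blast+
  then have "\<exists>g. linear g \<and> (\<forall>z. g z \<le> p z) \<and> (\<forall>(a, u)\<in>range (\<lambda>t. (t *\<^sub>R x, t * p x)). g a = u)"
    using line_graph by (intro hahn_banach_graph) auto
  then obtain g where g: "linear g" "\<And>z. g z \<le> p z"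
    and on_line: "\<forall>(a, u)\<in>range (\<lambda>t. (t *\<^sub>R x, t * p x)). g a = u"
    by blast
  have "g x = p x" using bspec[OF on_line rangeI[of _ 1]] by simp
  have p_le_norm: "p z \<le> norm z" for z
    unfolding p_def using infdist_le[OF subspace_0[OF F(1)], of z] by simp
  have "\<bar>g z\<bar> \<le> norm z" for z
    using g(2)[of z] g(2)[of "- z"] p_le_norm[of z] p_le_norm[of "- z"] linear_neg[OF g(1)] by simp
  moreover have "g m = 0" if "m \<in> F" for m
    using g(2)[of m] g(2)[of "- m"] that subspace_neg[OF F(1) that] linear_neg[OF g(1)]
    by (simp add: p_def)
  ultimately show ?thesis using g(1) \<open>g x = p x\<close> d by (intro exI[of _ g]) auto
qed

lemma scaleC_eq_Re_Im: "c *\<^sub>C x = Re c *\<^sub>R x + Im c *\<^sub>R (\<i> *\<^sub>C x)"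
proof -
  have "c *\<^sub>C x = (complex_of_real (Re c) + complex_of_real (Im c) * \<i>) *\<^sub>C x"
    by (metis complex_eq mult.commute)
  also have "\<dots> = Re c *\<^sub>R x + Im c *\<^sub>R (\<i> *\<^sub>C x)"
    by (simp add: scaleC_add_left scaleC_of_real flip: scaleC_scaleC)
  finally show ?thesis .
qed

lemma scaleC_zero_left [simp]: "0 *\<^sub>C x = 0"
  using scaleC_of_real[of 0 x] by simp

lemma scaleC_i_i: "\<i> *\<^sub>C (\<i> *\<^sub>C x) = - x"
  using scaleC_of_real[of "-1" x] by (simp add: scaleC_scaleC)

lemma csubspace_imp_subspace: "csubspace S \<Longrightarrow> subspace S"
  unfolding csubspace_def subspace_def by (metis scaleC_of_real)

lemma separating_complex_functional:
  fixes F :: "'a::complex_normed_vector set"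
  assumes F: "closed_csubspace F" and x: "x \<notin> F"
  shows "\<exists>h. (\<forall>a b. h (a + b) = h a + h b) \<and> (\<forall>c a. h (c *\<^sub>C a) = c * h a)
    \<and> (\<exists>K. \<forall>z. cmod (h z) \<le> K * norm z) \<and> (\<forall>m\<in>F. h m = 0) \<and> h x = 1"
proof -
  have "subspace F" "closed F"
    using F csubspace_imp_subspace by (auto simp: closed_csubspace_def)
  then obtain g where g: "linear g" "\<And>z. \<bar>g z\<bar> \<le> norm z" "\<And>m. m \<in> F \<Longrightarrow> g m = 0" "g x \<noteq> 0"
    using separating_linear_functional x by blast
  note g_add = linear_add[OF g(1)] and g_scale = linear_scale[OF g(1)]
  \<comment> \<open>complexification: h0 is complex-linear with real part g\<close>
  define h0 where "h0 z = complex_of_real (g z) - \<i> * complex_of_real (g (\<i> *\<^sub>C z))" for z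
  have h0_add: "h0 (a + b) = h0 a + h0 b" for a b
    unfolding h0_def by (simp add: g_add scaleC_add_right algebra_simps)
  have h0_scaleC: "h0 (c *\<^sub>C z) = c * h0 z" for c z
  proof -
    have "\<i> *\<^sub>C (c *\<^sub>C z) = c *\<^sub>C (\<i> *\<^sub>C z)"
      by (simp add: scaleC_scaleC mult.commute)
    also have "\<dots> = Re c *\<^sub>R (\<i> *\<^sub>C z) - Im c *\<^sub>R z"
      by (subst scaleC_eq_Re_Im) (simp add: scaleC_i_i)
    finally have "g (\<i> *\<^sub>C (c *\<^sub>C z)) = Re c * g (\<i> *\<^sub>C z) - Im c * g z"
      by (simp add: linear_diff[OF g(1)] g_scale)
    moreover have "g (c *\<^sub>C z) = Re c * g z + Im c * g (\<i> *\<^sub>C z)"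
      by (subst scaleC_eq_Re_Im) (simp add: g_add g_scale)
    ultimately show ?thesis unfolding h0_def by (simp add: complex_eq_iff)
  qed
  have h0_bound: "cmod (h0 z) \<le> 2 * norm z" for z
  proof -
    have "cmod (h0 z) \<le> \<bar>g z\<bar> + \<bar>g (\<i> *\<^sub>C z)\<bar>"
      unfolding h0_def by (rule order_trans[OF norm_triangle_ineq4]) (simp add: norm_mult)
    also have "\<dots> \<le> norm z + norm (\<i> *\<^sub>C z)" by (intro add_mono g(2))
    finally show ?thesis by (simp add: norm_scaleC)
  qed
  have h0_F: "h0 m = 0" if "m \<in> F" for m
    unfolding h0_def using g(3) that F by (simp add: closed_csubspace_def csubspace_def)
  have "h0 x \<noteq> 0"
    using g(4) by (auto simp: h0_def complex_eq_iff)
  define h where "h z = h0 z / h0 x" for z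
  have "cmod (h z) \<le> 2 / cmod (h0 x) * norm z" for z
    using divide_right_mono[OF h0_bound[of z] norm_ge_zero[of "h0 x"]]
    by (simp add: h_def norm_divide)
  moreover have "h (a + b) = h a + h b" "h (c *\<^sub>C a) = c * h a" for a b c
    by (simp_all add: h_def h0_add h0_scaleC add_divide_distrib)
  moreover have "h m = 0" if "m \<in> F" for m
    using h0_F that by (simp add: h_def)
  moreover have "h x = 1"
    using \<open>h0 x \<noteq> 0\<close> by (simp add: h_def)
  ultimately show ?thesis by blast
qed

lemma rank_one_operator:
  fixes F :: "'a::complex_normed_vector set"
  assumes "closed_csubspace F" "x \<notin> F"
  shows "\<exists>T. cbounded_linear T \<and> T x = y \<and> (\<forall>m\<in>F. T m = 0) \<and> (\<forall>z. \<exists>c. T z = c *\<^sub>C y)"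
proof -
  obtain h :: "'a \<Rightarrow> complex" and K where h_add: "\<And>a b. h (a + b) = h a + h b"
    and h_scaleC: "\<And>c a. h (c *\<^sub>C a) = c * h a" and h_bound: "\<And>z. cmod (h z) \<le> K * norm z"
    and "\<And>m. m \<in> F \<Longrightarrow> h m = 0" "h x = 1"
    using separating_complex_functional[OF assms] by blast
  define T where "T z = h z *\<^sub>C y" for z
  have "bounded_linear T"
  proof (rule bounded_linear_intro[where K = "K * norm y"])
    show "T (a + b) = T a + T b" for a b unfolding T_def h_add by (rule scaleC_add_left)
    show "T (r *\<^sub>R a) = r *\<^sub>R T a" for r a
      unfolding T_def by (metis h_scaleC scaleC_of_real scaleC_scaleC)
    show "norm (T a) \<le> norm a * (K * norm y)" for a
      using mult_right_mono[OF h_bound[of a] norm_ge_zero[of y]] by (simp add: T_def norm_scaleC ac_simps)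
  qed
  then have "cbounded_linear T"
    by (simp add: cbounded_linear_def T_def h_scaleC scaleC_scaleC)
  then show ?thesis
    using \<open>\<And>m. m \<in> F \<Longrightarrow> h m = 0\<close> \<open>h x = 1\<close>
    by (intro exI[of _ T]) (auto simp: T_def scaleC_one)
qed

section \<open>Closed linear spans\<close>

lemma bounded_linear_scaleC: "bounded_linear (\<lambda>x::'a::complex_normed_vector. c *\<^sub>C x)"
  by (rule bounded_linear_intro[where K = "cmod c"])
    (auto simp: scaleC_add_right norm_scaleC mult.commute scaleC_scaleC
      simp flip: scaleC_of_real)

lemma csubspace_closure:
  fixes S :: "'a::complex_normed_vector set"
  assumes S: "csubspace S"
  shows "csubspace (closure S)"
proof -
  have "(\<lambda>z. fst z + snd z) ` closure (S \<times> S) \<subseteq> closure ((\<lambda>z. fst z + snd z) ` (S \<times> S))"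
    by (intro continuous_image_closure_subset[of UNIV] continuous_on_add continuous_on_fst
        continuous_on_snd continuous_on_id) simp_all
  also have "\<dots> \<subseteq> closure S"
    using S by (intro closure_mono) (auto simp: csubspace_def)
  finally have "x + y \<in> closure S" if "x \<in> closure S" "y \<in> closure S" for x y
    using that by (auto simp: closure_Times image_subset_iff)
  moreover have "(\<lambda>x. c *\<^sub>C x) ` closure S \<subseteq> closure S" for c
  proof -
    have "(\<lambda>x. c *\<^sub>C x) ` closure S \<subseteq> closure ((\<lambda>x. c *\<^sub>C x) ` S)"
      by (intro continuous_image_closure_subset[of UNIV] linear_continuous_on bounded_linear_scaleC)
        simp
    also have "\<dots> \<subseteq> closure S"
      using S by (intro closure_mono) (auto simp: csubspace_def)
    finally show ?thesis .
  qed
  ultimately show ?thesis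
    using S closure_subset unfolding csubspace_def by blast
qed

lemma closed_csubspace_zero: "closed_csubspace S \<Longrightarrow> 0 \<in> S"
  by (simp add: closed_csubspace_def csubspace_def)

lemma closed_csubspace_scaleC: "closed_csubspace S \<Longrightarrow> x \<in> S \<Longrightarrow> c *\<^sub>C x \<in> S"
  by (simp add: closed_csubspace_def csubspace_def)

lemma csubspace_cspan: "csubspace (cspan S)"
  unfolding cspan_def csubspace_def by auto

lemma cspan_superset: "S \<subseteq> cspan S"
  unfolding cspan_def by auto

lemma cspan_least: "csubspace V \<Longrightarrow> S \<subseteq> V \<Longrightarrow> cspan S \<subseteq> V"
  unfolding cspan_def by auto

lemma closed_csubspace_closure_cspan: "closed_csubspace (closure (cspan S))"
  by (simp add: closed_csubspace_def csubspace_closure csubspace_cspan)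

lemma closure_cspan_least:
  "closed_csubspace V \<Longrightarrow> S \<subseteq> V \<Longrightarrow> closure (cspan S) \<subseteq> V"
  unfolding closed_csubspace_def by (intro closure_minimal cspan_least) auto

lemma subset_closure_cspan: "S \<subseteq> closure (cspan S)"
  using cspan_superset closure_subset by (rule order_trans)

lemma closed_csubspace_cjoin: "closed_csubspace (cjoin \<F>)"
  unfolding cjoin_def by (rule closed_csubspace_closure_cspan)

lemma cjoin_upper: "A \<in> \<F> \<Longrightarrow> A \<subseteq> cjoin \<F>"
  unfolding cjoin_def by (rule order_trans[OF Union_upper subset_closure_cspan])

lemma cjoin_least: "closed_csubspace V \<Longrightarrow> (\<And>A. A \<in> \<F> \<Longrightarrow> A \<subseteq> V) \<Longrightarrow> cjoin \<F> \<subseteq> V"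
  unfolding cjoin_def by (intro closure_cspan_least) auto

lemma closed_csubspace_Phi_of: "closed_csubspace (Phi_of J E)"
  unfolding Phi_of_def by (rule closed_csubspace_closure_cspan)

lemma Phi_of_mem: "T \<in> J \<Longrightarrow> x \<in> E \<Longrightarrow> T x \<in> Phi_of J E"
  unfolding Phi_of_def by (rule subsetD[OF subset_closure_cspan]) blast

lemma Phi_of_least:
  "closed_csubspace V \<Longrightarrow> (\<And>T x. T \<in> J \<Longrightarrow> x \<in> E \<Longrightarrow> T x \<in> V) \<Longrightarrow> Phi_of J E \<subseteq> V"
  unfolding Phi_of_def by (intro closure_cspan_least) auto

lemma closed_csubspace_vimage:
  assumes "cbounded_linear T" "closed_csubspace V"
  shows "closed_csubspace (T -` V)"
proof -
  have T: "bounded_linear T" using assms(1) by (simp add: cbounded_linear_def)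
  then interpret bounded_linear T .
  show ?thesis
    using assms continuous_closed_vimage[OF _ linear_continuous_at[OF T]]
    by (auto simp: closed_csubspace_def csubspace_def cbounded_linear_def add zero)
qed

lemma image_cjoin_subset:
  assumes "cbounded_linear T" "closed_csubspace V" "\<And>A. A \<in> \<F> \<Longrightarrow> T ` A \<subseteq> V"
  shows "T ` cjoin \<F> \<subseteq> V"
  using cjoin_least[OF closed_csubspace_vimage[OF assms(1,2)]] assms(3) by blast

section \<open>Nests and support functions\<close>

locale nest_support =
  fixes \<E> :: "'a::complex_normed_vector set set"
    and \<Phi> :: "'a set \<Rightarrow> 'a set"
  assumes nest: "nest \<E>"
    and support: "support_function \<E> \<Phi>"
begin

lemma nest_closed_csubspace: "E \<in> \<E> \<Longrightarrow> closed_csubspace E"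
  using nest by (simp add: nest_def)

lemma nest_linear: "E \<in> \<E> \<Longrightarrow> F \<in> \<E> \<Longrightarrow> E \<subseteq> F \<or> F \<subseteq> E"
  using nest by (simp add: nest_def)

lemma nest_cjoin_mem: "\<F> \<subseteq> \<E> \<Longrightarrow> cjoin \<F> \<in> \<E>"
  using nest by (simp add: nest_def)

lemma Phi_mem: "E \<in> \<E> \<Longrightarrow> \<Phi> E \<in> \<E>"
  using support by (simp add: support_function_def)

lemma Phi_mono: "E \<in> \<E> \<Longrightarrow> F \<in> \<E> \<Longrightarrow> E \<subseteq> F \<Longrightarrow> \<Phi> E \<subseteq> \<Phi> F"
  using support by (simp add: support_function_def)

lemma closed_csubspace_Phi: "E \<in> \<E> \<Longrightarrow> closed_csubspace (\<Phi> E)"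
  by (rule nest_closed_csubspace[OF Phi_mem])

lemma nest_minus_mem: "nest_minus \<E> E \<in> \<E>"
  unfolding nest_minus_def by (rule nest_cjoin_mem) blast

lemma nest_minus_subset: "E \<in> \<E> \<Longrightarrow> nest_minus \<E> E \<subseteq> E"
  unfolding nest_minus_def by (rule cjoin_least[OF nest_closed_csubspace]) auto

lemma subset_nest_minus: "H \<in> \<E> \<Longrightarrow> H \<subset> E \<Longrightarrow> H \<subseteq> nest_minus \<E> E"
  unfolding nest_minus_def by (rule cjoin_upper) blast

lemma Phi_minus_cases:
  assumes "E \<in> \<E>"
  obtains "E = {0}" "Phi_minus \<E> \<Phi> E = \<Phi> {0}"
    | "E \<noteq> {0}" "nest_minus \<E> E \<subset> E" "Phi_minus \<E> \<Phi> E = \<Phi> E"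
    | "E \<noteq> {0}" "nest_minus \<E> E = E" "Phi_minus \<E> \<Phi> E = cjoin (\<Phi> ` {F\<in>\<E>. F \<subset> E})"
  using nest_minus_subset[OF assms] unfolding Phi_minus_def
  by (cases "E = {0}"; cases "nest_minus \<E> E \<subset> E") auto

lemma Phi_minus_le:
  assumes E: "E \<in> \<E>"
  shows "Phi_minus \<E> \<Phi> E \<subseteq> \<Phi> E"
  using E
proof (cases rule: Phi_minus_cases)
  case 3
  have "cjoin (\<Phi> ` {F\<in>\<E>. F \<subset> E}) \<subseteq> \<Phi> E"
    using Phi_mono[OF _ E] by (intro cjoin_least[OF closed_csubspace_Phi[OF E]]) blast
  then show ?thesis using 3 by simp
qed simp_all

lemma closed_csubspace_Phi_minus: "E \<in> \<E> \<Longrightarrow> closed_csubspace (Phi_minus \<E> \<Phi> E)"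
  by (cases rule: Phi_minus_cases)
    (auto simp: closed_csubspace_Phi closed_csubspace_cjoin)

lemma M_of_image_subset_Phi_minus:
  assumes T: "T \<in> M_of \<E> \<Phi>" and E: "E \<in> \<E>"
  shows "T ` E \<subseteq> Phi_minus \<E> \<Phi> E"
  using E
proof (cases rule: Phi_minus_cases)
  case 3
  have "T ` nest_minus \<E> E \<subseteq> cjoin (\<Phi> ` {F\<in>\<E>. F \<subset> E})"
    unfolding nest_minus_def
  proof (rule image_cjoin_subset)
    show "cbounded_linear T" using T by (simp add: M_of_def)
    show "T ` F \<subseteq> cjoin (\<Phi> ` {F\<in>\<E>. F \<subset> E})" if F: "F \<in> {F\<in>\<E>. F \<subset> E}" for F
    proof (rule order_trans)
      show "T ` F \<subseteq> \<Phi> F" using T F by (simp add: M_of_def)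
      show "\<Phi> F \<subseteq> cjoin (\<Phi> ` {F\<in>\<E>. F \<subset> E})" using F by (intro cjoin_upper imageI)
    qed
  qed (rule closed_csubspace_cjoin)
  then show ?thesis using 3 by simp
qed (use T E in \<open>auto simp: M_of_def\<close>)

lemma M_of_Phi_minus: "M_of \<E> (Phi_minus \<E> \<Phi>) = M_of \<E> \<Phi>"
  using M_of_image_subset_Phi_minus Phi_minus_le unfolding M_of_def by blast

lemma mem_Phi_of_M_of:
  assumes F: "closed_csubspace F" and x: "x \<in> E" "x \<notin> F"
    and y: "\<And>H. H \<in> \<E> \<Longrightarrow> \<not> H \<subseteq> F \<Longrightarrow> y \<in> \<Phi> H"
  shows "y \<in> Phi_of (M_of \<E> \<Phi>) E"
proof -
  obtain T where T: "cbounded_linear T" "T x = y" "\<And>m. m \<in> F \<Longrightarrow> T m = 0" "\<And>z. \<exists>c. T z = c *\<^sub>C y"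
    using rank_one_operator[OF F x(2), of y] by auto
  have "T ` H \<subseteq> \<Phi> H" if H: "H \<in> \<E>" for H
  proof (cases "H \<subseteq> F")
    case True
    then have "T ` H \<subseteq> {0}" using T(3) by auto
    then show ?thesis using closed_csubspace_zero[OF closed_csubspace_Phi[OF H]] by auto
  next
    case False
    then have "y \<in> \<Phi> H" by (rule y[OF H])
    then show ?thesis
      using T(4) closed_csubspace_scaleC[OF closed_csubspace_Phi[OF H]] by (metis image_subsetI)
  qed
  then have "T \<in> M_of \<E> \<Phi>" using T(1) by (simp add: M_of_def)
  then show ?thesis using Phi_of_mem[OF _ x(1)] T(2) by metis
qed


lemma Phi_of_M_of_eq_Phi_minus:
  assumes Phi_zero: "\<Phi> {0} = {0}" and E: "E \<in> \<E>"
  shows "Phi_of (M_of \<E> \<Phi>) E = Phi_minus \<E> \<Phi> E"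
proof
  show "Phi_of (M_of \<E> \<Phi>) E \<subseteq> Phi_minus \<E> \<Phi> E"
    by (rule Phi_of_least[OF closed_csubspace_Phi_minus[OF E]])
      (rule subsetD[OF M_of_image_subset_Phi_minus[OF _ E] imageI])
  have target: "closed_csubspace (Phi_of (M_of \<E> \<Phi>) E)" by (rule closed_csubspace_Phi_of)
  show "Phi_minus \<E> \<Phi> E \<subseteq> Phi_of (M_of \<E> \<Phi>) E"
    using E
  proof (cases rule: Phi_minus_cases)
    case 1
    then show ?thesis using Phi_zero closed_csubspace_zero[OF target] by simp
  next
    case 2
    then obtain x where x: "x \<in> E" "x \<notin> nest_minus \<E> E" by blast
    show ?thesis
      unfolding 2(3)
    proof
      fix y assume y: "y \<in> \<Phi> E"
      show "y \<in> Phi_of (M_of \<E> \<Phi>) E"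
      proof (rule mem_Phi_of_M_of[OF nest_closed_csubspace[OF nest_minus_mem] x])
        fix H assume H: "H \<in> \<E>" "\<not> H \<subseteq> nest_minus \<E> E"
        then have "E \<subseteq> H"
          using nest_linear[OF E H(1)] subset_nest_minus[OF H(1)] by (metis psubsetI)
        then show "y \<in> \<Phi> H" using Phi_mono[OF E H(1)] y by auto
      qed
    qed
  next
    case 3
    have "\<Phi> F \<subseteq> Phi_of (M_of \<E> \<Phi>) E" if F: "F \<in> \<E>" "F \<subset> E" for F
    proof
      fix y assume y: "y \<in> \<Phi> F"
      \<comment> \<open>E is the join of its proper predecessors, so they cannot all lie in F\<close>
      have "\<exists>G\<in>\<E>. G \<subset> E \<and> \<not> G \<subseteq> F"
      proof (rule ccontr)
        assume "\<not> (\<exists>G\<in>\<E>. G \<subset> E \<and> \<not> G \<subseteq> F)"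
        then have "nest_minus \<E> E \<subseteq> F"
          unfolding nest_minus_def by (intro cjoin_least[OF nest_closed_csubspace[OF F(1)]]) auto
        then show False using 3(2) F(2) by auto
      qed
      then obtain x where x: "x \<in> E" "x \<notin> F" by auto
      show "y \<in> Phi_of (M_of \<E> \<Phi>) E"
      proof (rule mem_Phi_of_M_of[OF nest_closed_csubspace[OF F(1)] x])
        fix H assume H: "H \<in> \<E>" "\<not> H \<subseteq> F"
        then have "F \<subseteq> H" using nest_linear[OF F(1) H(1)] by auto
        then show "y \<in> \<Phi> H" using Phi_mono[OF F(1) H(1)] y by auto
      qed
    qed
    then have "cjoin (\<Phi> ` {F\<in>\<E>. F \<subset> E}) \<subseteq> Phi_of (M_of \<E> \<Phi>) E"
      by (intro cjoin_least[OF target]) auto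
    then show ?thesis using 3(3) by simp
  qed
qed

lemma Phi_minus_eq_if_admissible:
  assumes "admissible \<E> \<Phi>" and E: "E \<in> \<E>"
  shows "Phi_minus \<E> \<Phi> E = \<Phi> E"
  using E
proof (cases rule: Phi_minus_cases)
  case 3
  then show ?thesis
    using assms unfolding admissible_def by simp
qed simp_all

end

theorem mainTheorem5:
  fixes \<E> :: "'a::{complex_normed_vector, banach} set set"
    and \<Phi> :: "'a set \<Rightarrow> 'a set"
  assumes "nest \<E>"
    and "support_function \<E> \<Phi>"
    and "\<Phi> {0} = {0}"
  shows "M_of \<E> \<Phi> = M_of \<E> (Phi_minus \<E> \<Phi>)
     \<and> (\<forall>E\<in>\<E>. Phi_of (M_of \<E> \<Phi>) E = Phi_minus \<E> \<Phi> E)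
     \<and> (admissible \<E> \<Phi> \<longrightarrow> (\<forall>E\<in>\<E>. Phi_of (M_of \<E> \<Phi>) E = \<Phi> E))"
proof -
  interpret nest_support \<E> \<Phi>
    using assms(1,2) by unfold_locales
  show ?thesis
    by (simp add: M_of_Phi_minus Phi_of_M_of_eq_Phi_minus[OF assms(3)] Phi_minus_eq_if_admissible)
qed

end
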